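(* Consider the structured private pooled-sequencing scheme with random coverage depth described in the context, with $M$ unknown individuals, $M$ known individuals, base coverage $\alpha_0\in\mathbb{N}$, coverage variance parameter $\sigma_\alpha^2\ge 0$, and per-read error probability $\eta\in(0,1/2)$. Let $\epsilon\in(0,1)$. If $\alpha_0\geq\max\{e_1,e_2\}$, where $$e_1=\frac{16\eta(1-\eta)}{(1-2\eta)^2}\left(2^{M+1}-2\right)\ln\left(\frac{1}{\epsilon}\right),\qquad e_2=\sqrt{16\sigma_\alpha^2\left(1+\frac{\eta^2}{(1-2\eta)^2}\right)\left(2^{M+1}-2\right)\ln\left(\frac{1}{\epsilon}\right)},$$ then the data collector can produce an estimate $\hat{\mathbf{X}}=\phi(\mathbf{Y},\mathcal{R})$ satisfying $\mathbb{P}(\hat{\mathbf{x}}_n\neq\mathbf{x}_n)\le\epsilon$ for every SNP position $n\in[N]$.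
   Context: Setting. Each genome is described by $N$ SNP positions with binary values. There are $M$ "unknown" individuals $m\in\{0,\dots,M-1\}$ with SNP matrix $\mathbf{X}\in\{0,1\}^{M\times N}$ (entries $X_{m,n}$, unknown to everyone) and $M$ "known" individuals $k\in\{0,\dots,M-1\}$ with SNP matrix $\mathbf{Y}$ (entries $y_{k,n}$ known to the trusted data collector, i.i.d. uniform from the sequencer's viewpoint). Genomes are sheared into fragments, each containing at most one SNP and mappable unambiguously to its SNP position; all fragments are pooled without individual labels and read by a sequencer, each SNP read being flipped independently with probability $\eta$; $\mathcal{R}$ denotes the set of reads. In the structured scheme with random coverage depth, the number $\alpha_{m,n}$ of fragments of unknown individual $m$ covering position $n$ is modeled as $\mathcal{N}(2^m\alpha_0,2^m\sigma_\alpha^2)$, and the number $\tilde\alpha_{k,n}$ for known individual $k$ as $\mathcal{N}(2^k\alpha_0,2^k\sigma_\alpha^2)$ (Gaussian approximations of binomial counts). For each position the reads reveal only the total count of read 1's among fragments covering $n$; as in the paper, aggregated read noise is modeled by its central-limit Gaussian approximation, so that after normalization the data collector observes $G_n=\sum_{m=0}^{M-1}(2^m+\delta_{m,n})X_{m,n}+\sum_{k=0}^{M-1}(2^k+\tilde\delta_{k,n})y_{k,n}+Z_n$, with $\delta_{m,n}\sim\mathcal{N}(0,2^m\sigma_\alpha^2/\alpha_0^2)$, $\tilde\delta_{k,n}\sim\mathcal{N}(0,2^k\sigma_\alpha^2/\alpha_0^2)$, and $Z_n\sim\mathcal{N}\big(0,\frac{2^{M+1}-2}{(1-2\eta)^2}(\frac{\eta(1-\eta)}{\alpha_0}+\eta^2\frac{\sigma_\alpha^2}{\alpha_0^2})\big)$.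 $\mathbf{x}_n,\hat{\mathbf{x}}_n$ denote the $n$-th columns of $\mathbf{X},\hat{\mathbf{X}}$. *)

theory Defs
  imports "HOL-Probability.Probability"
begin

definition gauss :: "real \<Rightarrow> real \<Rightarrow> real measure" where
  "gauss mu v = (if v = 0 then return borel mu
                 else density lborel (normal_density mu (sqrt v)))"

text \<open>Variance of the aggregated (CLT-approximated) read noise Z_n.\<close>
definition var_Z :: "nat \<Rightarrow> nat \<Rightarrow> real \<Rightarrow> real \<Rightarrow> real" where
  "var_Z M alpha0 sigma2 eta =
     ((2::real)^(M+1) - 2) / (1 - 2*eta)^2 *
     (eta*(1-eta)/real alpha0 + eta^2 * sigma2 / (real alpha0)^2)"

text \<open>Joint law of the noise at one SNP position n:
  ((delta_{0..M-1,n}, tilde delta_{0..M-1,n}), Z_n), all independent.\<close>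
definition noise_space :: "nat \<Rightarrow> nat \<Rightarrow> real \<Rightarrow> real \<Rightarrow>
    (((nat \<Rightarrow> real) \<times> (nat \<Rightarrow> real)) \<times> real) measure" where
  "noise_space M alpha0 sigma2 eta =
     (PiM {..<M} (\<lambda>m. gauss 0 (2^m * sigma2 / (real alpha0)^2))
      \<Otimes>\<^sub>M PiM {..<M} (\<lambda>k. gauss 0 (2^k * sigma2 / (real alpha0)^2)))
      \<Otimes>\<^sub>M gauss 0 (var_Z M alpha0 sigma2 eta)"

text \<open>Normalized observation G_n for unknown column x and known column y.\<close>
definition obs :: "nat \<Rightarrow> (nat \<Rightarrow> bool) \<Rightarrow> (nat \<Rightarrow> bool) \<Rightarrow>
    ((nat \<Rightarrow> real) \<times> (nat \<Rightarrow> real)) \<times> real \<Rightarrow> real" where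
  "obs M x y w =
     (case w of ((d, dt), z) \<Rightarrow>
        (\<Sum>m<M. (2^m + d m) * of_bool (x m))
      + (\<Sum>k<M. (2^k + dt k) * of_bool (y k)) + z)"

end

(* After subtracting the known contribution sum_k 2^k y_k from G_n, what remains is the integer
   sum_m 2^m x_m plus a noise term which, as a sum of independent centred Gaussians, is itself
   Gaussian with variance at most (2^(M+1) - 2) sigma^2 / alpha0^2 + Var Z_n.  Rounding to the nearest
   integer and reading off binary digits therefore recovers x_n whenever the noise is below 1/2
   in absolute value.  The Gaussian tail bound P(|N| >= t) <= exp (-t^2 / (2 V)) makes the failure
   probability at most eps as soon as 8 V ln (1/eps) <= 1, and the two lower bounds on alpha0
   control the read-error and the coverage part of V respectively. *)

theory Submission
  imports Defs
begin

lemma sets_gauss [simp, measurable_cong]: "sets (gauss mu v) = sets borel"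
  by (simp add: gauss_def)

lemma space_gauss [simp]: "space (gauss mu v) = UNIV"
  by (simp add: gauss_def)

lemma prob_space_gauss [simp, intro]: "0 \<le> v \<Longrightarrow> prob_space (gauss mu v)"
  by (cases "v = 0") (auto simp: gauss_def prob_space_return prob_space_normal_density)

lemma gauss_zero_var: "gauss mu 0 = return borel mu"
  by (simp add: gauss_def)

lemma distr_gauss_id: "distr (gauss mu v) borel (\<lambda>x. x) = gauss mu v"
  by (metis distr_cong distr_id sets_gauss)

lemma AE_gauss_zero_var: "AE x in gauss mu 0. x = mu"
  unfolding gauss_zero_var by (simp add: AE_return)

lemma gauss_pos_var: "0 < v \<Longrightarrow> gauss mu v = density lborel (normal_density mu (sqrt v))"
  by (simp add: gauss_def)

lemma distr_eq_gauss_iff_distributed: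
  assumes "0 < v" and [measurable]: "X \<in> borel_measurable P"
  shows "distr P borel X = gauss mu v \<longleftrightarrow> distributed P lborel X (normal_density mu (sqrt v))"
proof -
  have "distr P borel X = distr P lborel X"
    by (rule distr_cong) auto
  then show ?thesis
    using assms by (simp add: gauss_pos_var distributed_def)
qed

lemma (in prob_space) distr_mult_gauss:
  assumes "0 \<le> v" and [measurable]: "X \<in> borel_measurable M"
    and X: "distr M borel X = gauss 0 v"
  shows "distr M borel (\<lambda>w. c * X w) = gauss 0 (c\<^sup>2 * v)"
proof -
  consider "c = 0" | "v = 0" | "c \<noteq> 0" "0 < v"
    using assms(1) by fastforce
  then show ?thesis
  proof cases
    case 1
    then show ?thesis by (simp add: gauss_zero_var)
  next
    case 2
    have "distr M borel (\<lambda>w. c * X w) = distr (distr M borel X) borel ((*) c)"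
      by (simp add: distr_distr comp_def)
    also have "\<dots> = return borel 0"
      using 2 by (simp add: X gauss_zero_var distr_return)
    finally show ?thesis
      using 2 by (simp add: gauss_zero_var)
  next
    case 3
    have "distributed M lborel X (normal_density 0 (sqrt v))"
      using X 3 by (simp add: distr_eq_gauss_iff_distributed)
    from normal_density_affine[OF this, of c 0]
    have "distributed M lborel (\<lambda>w. c * X w) (normal_density 0 (sqrt (c\<^sup>2 * v)))"
      using 3 by (simp add: real_sqrt_mult)
    then show ?thesis
      using 3 by (simp add: distr_eq_gauss_iff_distributed)
  qed
qed

lemma (in pair_prob_space) distr_pair_snd: "distr (M1 \<Otimes>\<^sub>M M2) M2 snd = M2"
proof -
  have "distr (M1 \<Otimes>\<^sub>M M2) M2 snd
      = distr (distr (M2 \<Otimes>\<^sub>M M1) (M1 \<Otimes>\<^sub>M M2) (\<lambda>(x, y). (y, x))) M2 snd"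
    by (simp add: distr_pair_swap[symmetric])
  also have "\<dots> = distr (M2 \<Otimes>\<^sub>M M1) M2 fst"
    by (subst distr_distr) (auto simp: comp_def split_beta')
  also have "\<dots> = M2"
    by (rule M1.distr_pair_fst)
  finally show ?thesis .
qed

lemma distr_plus_gauss_pair:
  assumes v: "0 \<le> v" and u: "0 \<le> u"
  shows "distr (gauss 0 v \<Otimes>\<^sub>M gauss 0 u) borel (\<lambda>(a, b). a + b) = gauss 0 (v + u)"
proof -
  let ?P = "gauss 0 v \<Otimes>\<^sub>M gauss 0 u"
  interpret P: pair_prob_space "gauss 0 v" "gauss 0 u"
    using v u by (simp add: pair_prob_space_def pair_sigma_finite_def prob_space_imp_sigma_finite)
  have fst_gauss: "distr ?P borel fst = gauss 0 v"
    by (metis P.M2.distr_pair_fst distr_cong sets_gauss)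
  have snd_gauss: "distr ?P borel snd = gauss 0 u"
    by (metis P.distr_pair_snd distr_cong sets_gauss)
  have add: "distr ?P borel (\<lambda>(a, b). a + b) = distr ?P borel (\<lambda>w. fst w + snd w)"
    by (rule distr_cong) auto
  consider "v = 0" | "u = 0" | "0 < v" "0 < u"
    using v u by fastforce
  then show ?thesis
  proof cases
    case 1
    have "AE w in distr ?P borel fst. w = 0"
      unfolding fst_gauss unfolding 1 by (rule AE_gauss_zero_var)
    then have "AE w in ?P. fst w = 0"
      by (rule AE_distrD[rotated]) simp
    then have "distr ?P borel (\<lambda>w. fst w + snd w) = distr ?P borel snd"
      by (intro distr_cong_AE) (auto elim!: eventually_mono)
    then show ?thesis
      using add snd_gauss 1 by simp
  next
    case 2
    have "AE w in distr ?P borel snd. w = 0"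
      unfolding snd_gauss unfolding 2 by (rule AE_gauss_zero_var)
    then have "AE w in ?P. snd w = 0"
      by (rule AE_distrD[rotated]) simp
    then have "distr ?P borel (\<lambda>w. fst w + snd w) = distr ?P borel fst"
      by (intro distr_cong_AE) (auto elim!: eventually_mono)
    then show ?thesis
      using add fst_gauss 2 by simp
  next
    case 3
    have "distr ?P (borel \<Otimes>\<^sub>M borel) (\<lambda>w. (fst w, snd w)) = distr ?P ?P (\<lambda>w. w)"
      by (intro distr_cong) (auto intro: sets_pair_measure_cong)
    then have "P.indep_var borel fst borel snd"
      by (subst P.indep_var_distribution_eq) (simp add: fst_gauss snd_gauss)
    from P.add_indep_normal[OF this, of "sqrt v" "sqrt u" 0 0]
    have "distributed ?P lborel (\<lambda>w. fst w + snd w) (normal_density 0 (sqrt (v + u)))"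
      using fst_gauss snd_gauss 3 v u by (simp add: distr_eq_gauss_iff_distributed)
    then show ?thesis
      using 3 by (simp add: add distr_eq_gauss_iff_distributed)
  qed
qed

lemma distr_plus_indep_gauss:
  assumes "prob_space P" "prob_space Q"
    and [measurable]: "f \<in> borel_measurable P" "g \<in> borel_measurable Q"
    and f: "distr P borel f = gauss 0 v" and g: "distr Q borel g = gauss 0 u"
    and "0 \<le> v" "0 \<le> u"
  shows "distr (P \<Otimes>\<^sub>M Q) borel (\<lambda>(a, b). f a + g b) = gauss 0 (v + u)"
proof -
  have "distr (P \<Otimes>\<^sub>M Q) borel (\<lambda>(a, b). f a + g b)
      = distr (distr (P \<Otimes>\<^sub>M Q) (borel \<Otimes>\<^sub>M borel) (\<lambda>(a, b). (f a, g b))) borel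
          (\<lambda>(a, b). a + b)"
    by (subst distr_distr) (auto simp: comp_def split_beta')
  also have "distr (P \<Otimes>\<^sub>M Q) (borel \<Otimes>\<^sub>M borel) (\<lambda>(a, b). (f a, g b))
      = gauss 0 v \<Otimes>\<^sub>M gauss 0 u"
    using pair_measure_distr[of f P borel g Q borel] assms
    by (simp add: prob_space_imp_sigma_finite)
  finally show ?thesis
    using assms by (simp add: distr_plus_gauss_pair)
qed

lemma distr_PiM_sum_gauss:
  fixes I :: "'i set" and c s :: "'i \<Rightarrow> real"
  assumes "finite I" and s: "\<And>i. 0 \<le> s i"
  shows "distr (PiM I (\<lambda>i. gauss 0 (s i))) borel (\<lambda>d. \<Sum>i\<in>I. c i * d i)
       = gauss 0 (\<Sum>i\<in>I. (c i)\<^sup>2 * s i)"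
proof -
  let ?N = "\<lambda>i. gauss 0 (s i)"
  interpret N: product_prob_space ?N
    by (auto simp: product_prob_space_def product_prob_space_axioms_def product_sigma_finite_def s
        intro: prob_space_imp_sigma_finite)
  have prob_PiM: "prob_space (PiM J ?N)" for J
    using s by (intro prob_space_PiM) auto
  show ?thesis
    using \<open>finite I\<close>
  proof (induction I rule: finite_induct)
    case empty
    interpret prob_space "PiM {} ?N"
      by (rule prob_PiM)
    show ?case
      by (simp add: gauss_zero_var)
  next
    case (insert i I)
    have merge: "merge I {i} \<in> measurable (PiM I ?N \<Otimes>\<^sub>M PiM {i} ?N) (PiM (insert i I) ?N)"
      using measurable_merge[of I "{i}" ?N] by simp
    have "distr (PiM (insert i I) ?N) borel (\<lambda>d. \<Sum>j\<in>insert i I. c j * d j)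
        = distr (distr (PiM I ?N \<Otimes>\<^sub>M PiM {i} ?N) (PiM (insert i I) ?N) (merge I {i})) borel
            (\<lambda>d. \<Sum>j\<in>insert i I. c j * d j)"
      using N.distr_merge[of I "{i}"] insert by simp
    also have "\<dots> = distr (PiM I ?N \<Otimes>\<^sub>M PiM {i} ?N) borel
        (\<lambda>w. \<Sum>j\<in>insert i I. c j * merge I {i} w j)"
      by (simp add: distr_distr[OF _ merge] comp_def)
    also have "\<dots> = distr (PiM I ?N \<Otimes>\<^sub>M PiM {i} ?N) borel
        (\<lambda>(d, e). (\<Sum>j\<in>I. c j * d j) + c i * e i)"
      using insert by (intro distr_cong) (auto simp: merge_def intro!: sum.cong)
    also have "\<dots> = gauss 0 ((\<Sum>j\<in>I. (c j)\<^sup>2 * s j) + (c i)\<^sup>2 * s i)"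
    proof (rule distr_plus_indep_gauss[OF prob_PiM prob_PiM _ _ insert.IH])
      interpret prob_space "PiM {i} ?N"
        by (rule prob_PiM)
      have "distr (PiM {i} ?N) borel (\<lambda>e. e i) = gauss 0 (s i)"
        using distr_PiM_component[of "{i}" ?N i] s by (simp cong: distr_cong)
      then show "distr (PiM {i} ?N) borel (\<lambda>e. c i * e i) = gauss 0 ((c i)\<^sup>2 * s i)"
        using s by (intro distr_mult_gauss) auto
      show "(\<lambda>d. \<Sum>j\<in>I. c j * d j) \<in> borel_measurable (PiM I ?N)"
        by measurable
      show "(\<lambda>e. c i * e i) \<in> borel_measurable (PiM {i} ?N)"
        by measurable
      show "0 \<le> (\<Sum>j\<in>I. (c j)\<^sup>2 * s j)" "0 \<le> (c i)\<^sup>2 * s i"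
        using s by (auto intro: sum_nonneg)
    qed
    finally show ?case
      using insert by (simp add: add.commute)
  qed
qed

lemma measure_gauss_uminus:
  assumes "0 \<le> v" and "A \<in> sets borel"
  shows "measure (gauss 0 v) (uminus -` A) = measure (gauss 0 v) A"
proof -
  interpret prob_space "gauss 0 v"
    using assms(1) by simp
  have "distr (gauss 0 v) borel (\<lambda>x. (-1) * x) = gauss 0 v"
    using assms(1) by (subst distr_mult_gauss) (auto simp: distr_gauss_id)
  then have "measure (gauss 0 v) A = measure (distr (gauss 0 v) borel uminus) A"
    by simp
  also have "\<dots> = measure (gauss 0 v) (uminus -` A)"
    using assms(2) by (simp add: measure_distr)
  finally show ?thesis ..
qed

lemma normal_density_shift_le:
  assumes "0 < s" and "0 \<le> t" and "0 \<le> y"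
  shows "normal_density 0 s (t + y) \<le> exp (- t\<^sup>2 / (2 * s\<^sup>2)) * normal_density 0 s y"
proof -
  have "t\<^sup>2 + y\<^sup>2 \<le> (t + y)\<^sup>2"
    using assms by (simp add: power2_eq_square algebra_simps)
  then have "- (t + y)\<^sup>2 / (2 * s\<^sup>2) \<le> - t\<^sup>2 / (2 * s\<^sup>2) + - y\<^sup>2 / (2 * s\<^sup>2)"
    using assms(1) by (simp add: field_simps)
  then have "exp (- (t + y)\<^sup>2 / (2 * s\<^sup>2))
      \<le> exp (- t\<^sup>2 / (2 * s\<^sup>2)) * exp (- y\<^sup>2 / (2 * s\<^sup>2))"
    by (simp flip: exp_add)
  then show ?thesis
    using assms(1) by (simp add: normal_density_def divide_right_mono)
qed

lemma measure_gauss_atLeast_shift_le: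
  assumes "0 < v" and "0 \<le> t"
  shows "measure (gauss 0 v) {t..} \<le> exp (- t\<^sup>2 / (2 * v)) * measure (gauss 0 v) {0..}"
proof -
  let ?\<phi> = "normal_density 0 (sqrt v)" and ?e = "exp (- t\<^sup>2 / (2 * v))"
  interpret prob_space "gauss 0 v"
    using assms(1) by simp
  have "emeasure (gauss 0 v) {t..} = (\<integral>\<^sup>+x. ennreal (?\<phi> x) * indicator {t..} x \<partial>lborel)"
    using assms(1) by (simp add: gauss_pos_var emeasure_density)
  also have "\<dots> = (\<integral>\<^sup>+y. ennreal (?\<phi> (t + y)) * indicator {0..} y \<partial>lborel)"
    using nn_integral_real_affine[of "\<lambda>x. ennreal (?\<phi> x) * indicator {t..} x" 1 t]
    by (simp add: indicator_def)
  also have "\<dots> \<le> (\<integral>\<^sup>+y. ?e * (ennreal (?\<phi> y) * indicator {0..} y) \<partial>lborel)"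
    using normal_density_shift_le[of "sqrt v" t] assms
    by (intro nn_integral_mono) (auto simp: indicator_def ennreal_mult[symmetric] intro: ennreal_leI)
  also have "\<dots> = ?e * emeasure (gauss 0 v) {0..}"
    using assms(1) by (simp add: gauss_pos_var emeasure_density nn_integral_cmult)
  finally show ?thesis
    by (simp add: emeasure_eq_measure ennreal_mult[symmetric] ennreal_le_iff)
qed

lemma measure_gauss_atLeast_0:
  assumes "0 < v"
  shows "measure (gauss 0 v) {0..} = 1/2"
proof -
  interpret prob_space "gauss 0 v"
    using assms by simp
  have "emeasure (gauss 0 v) {0} = 0"
    using assms AE_lborel_singleton[of 0]
    by (auto simp: gauss_pos_var emeasure_density nn_integral_0_iff_AE indicator_def elim!: eventually_mono)
  have "measure (gauss 0 v) {..0} = measure (gauss 0 v) ({..<0} \<union> {0})"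
    by (metis ivl_disj_un_singleton(2))
  also have "\<dots> = measure (gauss 0 v) {..<0}"
    using \<open>emeasure (gauss 0 v) {0} = 0\<close> by (subst finite_measure_Union) (auto simp: measure_def)
  also have "\<dots> = 1 - measure (gauss 0 v) {0..}"
    using prob_compl[of "{0..}"] by (simp add: Compl_eq_Diff_UNIV[symmetric])
  finally have "measure (gauss 0 v) {..0} = 1 - measure (gauss 0 v) {0..}" .
  moreover have "measure (gauss 0 v) {..0} = measure (gauss 0 v) {0..}"
    using measure_gauss_uminus[of v "{0..}"] assms by (simp add: vimage_def atMost_def)
  ultimately show ?thesis
    by simp
qed

lemma measure_gauss_tail:
  assumes "0 < v" and "0 < t"
  shows "measure (gauss 0 v) {u. t \<le> \<bar>u\<bar>} \<le> exp (- t\<^sup>2 / (2 * v))"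
proof -
  interpret prob_space "gauss 0 v"
    using assms by simp
  have "{u. t \<le> \<bar>u\<bar>} = {t..} \<union> {..-t}"
    by auto
  then have "measure (gauss 0 v) {u. t \<le> \<bar>u\<bar>} = measure (gauss 0 v) {t..} + measure (gauss 0 v) {..-t}"
    using assms(2) by (auto intro!: finite_measure_Union)
  also have "measure (gauss 0 v) {..-t} = measure (gauss 0 v) {t..}"
    using measure_gauss_uminus[of v "{t..}"] assms(1) by (simp add: vimage_def atMost_def le_minus_iff)
  also have "measure (gauss 0 v) {t..} + measure (gauss 0 v) {t..} \<le> 2 * (exp (- t\<^sup>2 / (2 * v)) * (1/2))"
    using measure_gauss_atLeast_shift_le[of v t] measure_gauss_atLeast_0[of v] assms by simp
  finally show ?thesis
    by simp
qed

lemma measure_gauss_tail_le: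
  assumes "0 \<le> v" and "0 < t" and "0 < eps" and "2 * v * ln (1 / eps) \<le> t\<^sup>2"
  shows "measure (gauss 0 v) {u. t \<le> \<bar>u\<bar>} \<le> eps"
proof (cases "v = 0")
  case True
  then show ?thesis
    using assms by (simp add: gauss_zero_var measure_return)
next
  case False
  then have "0 < v"
    using assms(1) by simp
  have "ln (1 / eps) \<le> t\<^sup>2 / (2 * v)"
    using assms(4) \<open>0 < v\<close> by (simp add: field_simps)
  then have "exp (- t\<^sup>2 / (2 * v)) \<le> exp (- ln (1 / eps))"
    by simp
  also have "\<dots> = eps"
    using assms(3) by (simp add: ln_div)
  finally show ?thesis
    using measure_gauss_tail[OF \<open>0 < v\<close> assms(2)] by linarith
qed

definition bits_value :: "nat \<Rightarrow> (nat \<Rightarrow> bool) \<Rightarrow> nat" where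
  "bits_value M b = (\<Sum>i<M. of_bool (b i) * 2 ^ i)"

lemma bit_bits_value: "bit (bits_value M b) m \<longleftrightarrow> m < M \<and> b m"
proof -
  have "bits_value M b = horner_sum of_bool 2 (map b [0..<M])"
    by (simp add: bits_value_def horner_sum_eq_sum atLeast0LessThan)
  then show ?thesis
    by (auto simp: bit_horner_sum_bit_iff)
qed

definition decode :: "nat \<Rightarrow> (nat \<Rightarrow> bool) \<Rightarrow> real \<Rightarrow> nat \<Rightarrow> bool" where
  "decode M y g m = bit (nat \<lfloor>g - real (bits_value M y) + 1 / 2\<rfloor>) m"

lemma measurable_decode: "(\<lambda>g. decode M y g m) \<in> measurable borel (count_space UNIV)"
  unfolding decode_def by measurable

definition obs_noise :: "nat \<Rightarrow> (nat \<Rightarrow> bool) \<Rightarrow> (nat \<Rightarrow> bool) \<Rightarrow>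
    ((nat \<Rightarrow> real) \<times> (nat \<Rightarrow> real)) \<times> real \<Rightarrow> real" where
  "obs_noise M x y w =
     (case w of ((d, dt), z) \<Rightarrow> (\<Sum>m<M. of_bool (x m) * d m) + (\<Sum>k<M. of_bool (y k) * dt k) + z)"

lemma obs_eq_bits_value_add_noise:
  "obs M x y w = real (bits_value M x) + real (bits_value M y) + obs_noise M x y w"
  by (cases w) (auto simp: obs_def obs_noise_def bits_value_def ring_distribs sum.distrib mult.commute)

lemma decode_obs:
  assumes "\<bar>obs_noise M x y w\<bar> < 1 / 2" and "m < M"
  shows "decode M y (obs M x y w) m = x m"
proof -
  have "\<lfloor>obs M x y w - real (bits_value M y) + 1 / 2\<rfloor> = int (bits_value M x)"
    using assms(1) by (intro floor_unique) (auto simp: obs_eq_bits_value_add_noise)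
  then show ?thesis
    using assms(2) by (simp add: decode_def bit_bits_value)
qed

definition noise_var ::
    "nat \<Rightarrow> nat \<Rightarrow> real \<Rightarrow> real \<Rightarrow> (nat \<Rightarrow> bool) \<Rightarrow> (nat \<Rightarrow> bool) \<Rightarrow> real" where
  "noise_var M alpha0 sigma2 eta x y =
     (\<Sum>m<M. of_bool (x m) * (2^m * sigma2 / (real alpha0)^2))
   + (\<Sum>k<M. of_bool (y k) * (2^k * sigma2 / (real alpha0)^2))
   + var_Z M alpha0 sigma2 eta"

lemma distr_obs_noise:
  assumes "0 \<le> sigma2" and "0 \<le> var_Z M alpha0 sigma2 eta"
  shows "distr (noise_space M alpha0 sigma2 eta) borel (obs_noise M x y)
       = gauss 0 (noise_var M alpha0 sigma2 eta x y)"
proof -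
  let ?s = "\<lambda>m::nat. 2^m * sigma2 / (real alpha0)^2"
  let ?P = "PiM {..<M} (\<lambda>m. gauss 0 (?s m))"
  let ?V = "\<lambda>b. \<Sum>m<M. (of_bool (b m))\<^sup>2 * ?s m"
  let ?cov = "\<lambda>(d, dt). (\<Sum>m<M. of_bool (x m) * d m) + (\<Sum>k<M. of_bool (y k) * dt k)"
  have s: "0 \<le> ?s m" for m
    using assms(1) by simp
  have prob_P: "prob_space ?P"
    using s by (intro prob_space_PiM) auto
  have cov: "distr (?P \<Otimes>\<^sub>M ?P) borel ?cov = gauss 0 (?V x + ?V y)"
    using s by (intro distr_plus_indep_gauss[OF prob_P prob_P _ _ distr_PiM_sum_gauss distr_PiM_sum_gauss])
      (auto intro: sum_nonneg)
  have "distr ((?P \<Otimes>\<^sub>M ?P) \<Otimes>\<^sub>M gauss 0 (var_Z M alpha0 sigma2 eta)) borel (\<lambda>(p, z). ?cov p + z)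
      = gauss 0 (?V x + ?V y + var_Z M alpha0 sigma2 eta)"
    using s assms
    by (intro distr_plus_indep_gauss[OF prob_space_pair[OF prob_P prob_P] _ _ _ cov distr_gauss_id])
      (auto intro!: add_nonneg_nonneg sum_nonneg mult_nonneg_nonneg)
  moreover have "obs_noise M x y = (\<lambda>(p, z). ?cov p + z)"
    by (auto simp: obs_noise_def fun_eq_iff)
  moreover have "noise_var M alpha0 sigma2 eta x y = ?V x + ?V y + var_Z M alpha0 sigma2 eta"
    unfolding noise_var_def by (intro arg_cong2[where f = "(+)"] sum.cong) auto
  ultimately show ?thesis
    by (simp only: noise_space_def)
qed

lemma var_Z_nonneg:
  assumes "0 \<le> sigma2" and "0 \<le> eta" and "eta \<le> 1"
  shows "0 \<le> var_Z M alpha0 sigma2 eta"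
proof -
  have "2 \<le> (2::real) ^ (M + 1)"
    by simp
  then show ?thesis
    unfolding var_Z_def using assms by (intro mult_nonneg_nonneg divide_nonneg_nonneg add_nonneg_nonneg) auto
qed

lemma noise_var_nonneg:
  assumes "0 \<le> sigma2" and "0 \<le> var_Z M alpha0 sigma2 eta"
  shows "0 \<le> noise_var M alpha0 sigma2 eta x y"
  unfolding noise_var_def using assms by (intro add_nonneg_nonneg sum_nonneg) auto

lemma noise_var_le:
  assumes "0 \<le> sigma2"
  shows "noise_var M alpha0 sigma2 eta x y
       \<le> ((2::real) ^ (M + 1) - 2) * sigma2 / (real alpha0)^2 + var_Z M alpha0 sigma2 eta"
proof -
  have "(\<Sum>m<M. of_bool (b m) * (2^m * sigma2 / (real alpha0)^2))
      \<le> (\<Sum>m<M. (2::real)^m) * sigma2 / (real alpha0)^2" for b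
    using assms by (auto simp: sum_distrib_right sum_divide_distrib intro!: sum_mono)
  also have "(\<Sum>m<M. (2::real)^m) * sigma2 / (real alpha0)^2
      = ((2::real) ^ (M + 1) - 2) * sigma2 / (real alpha0)^2 / 2"
    by (cases "alpha0 = 0") (simp_all add: sum_gp_strict field_simps)
  finally have half: "(\<Sum>m<M. of_bool (b m) * (2^m * sigma2 / (real alpha0)^2))
      \<le> ((2::real) ^ (M + 1) - 2) * sigma2 / (real alpha0)^2 / 2" for b .
  show ?thesis
    unfolding noise_var_def using half[of x] half[of y] by linarith
qed

lemma measure_decode_error_le:
  assumes "0 \<le> sigma2" and "0 \<le> var_Z M alpha0 sigma2 eta"
  shows "measure (noise_space M alpha0 sigma2 eta)
           {w \<in> space (noise_space M alpha0 sigma2 eta). \<exists>m<M. decode M y (obs M x y w) m \<noteq> x m}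
       \<le> measure (gauss 0 (noise_var M alpha0 sigma2 eta x y)) {u. 1 / 2 \<le> \<bar>u\<bar>}"
proof -
  let ?NS = "noise_space M alpha0 sigma2 eta"
  interpret prob_space ?NS
    unfolding noise_space_def using assms by (intro prob_space_pair prob_space_PiM) auto
  have "obs_noise M x y = (\<lambda>w. (\<Sum>m<M. of_bool (x m) * fst (fst w) m)
      + (\<Sum>k<M. of_bool (y k) * snd (fst w) k) + snd w)"
    by (auto simp: obs_noise_def fun_eq_iff split: prod.split)
  then have obs_noise_measurable: "obs_noise M x y \<in> borel_measurable ?NS"
    by (simp add: noise_space_def)
  have "{w \<in> space ?NS. \<exists>m<M. decode M y (obs M x y w) m \<noteq> x m}
      \<subseteq> obs_noise M x y -` {u. 1 / 2 \<le> \<bar>u\<bar>} \<inter> space ?NS"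
  proof
    fix w
    assume "w \<in> {w \<in> space ?NS. \<exists>m<M. decode M y (obs M x y w) m \<noteq> x m}"
    then obtain m where "w \<in> space ?NS" "m < M" "decode M y (obs M x y w) m \<noteq> x m"
      by blast
    then have "\<not> \<bar>obs_noise M x y w\<bar> < 1 / 2"
      using decode_obs by blast
    with \<open>w \<in> space ?NS\<close> show "w \<in> obs_noise M x y -` {u. 1 / 2 \<le> \<bar>u\<bar>} \<inter> space ?NS"
      by simp
  qed
  then have "measure ?NS {w \<in> space ?NS. \<exists>m<M. decode M y (obs M x y w) m \<noteq> x m}
      \<le> measure ?NS (obs_noise M x y -` {u. 1 / 2 \<le> \<bar>u\<bar>} \<inter> space ?NS)"
    by (intro finite_measure_mono measurable_sets[OF obs_noise_measurable]) auto
  also have "\<dots> = measure (distr ?NS borel (obs_noise M x y)) {u. 1 / 2 \<le> \<bar>u\<bar>}"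
    by (rule measure_distr[symmetric]) (auto simp: obs_noise_measurable)
  finally show ?thesis
    using assms by (simp add: distr_obs_noise)
qed

lemma variance_budget:
  fixes M alpha0 :: nat and sigma2 eta eps :: real
  assumes "0 \<le> sigma2" and "0 < eta" and "eta < 1/2" and "0 < eps" and "eps < 1"
    and alpha0_read: "real alpha0 \<ge> 16 * eta * (1 - eta) / (1 - 2*eta)^2 * ((2::real)^(M+1) - 2) * ln (1/eps)"
    and alpha0_cov: "real alpha0 \<ge> sqrt (16 * sigma2 * (1 + eta^2 / (1 - 2*eta)^2) * ((2::real)^(M+1) - 2) * ln (1/eps))"
  shows "8 * ln (1/eps) * (((2::real)^(M+1) - 2) * sigma2 / (real alpha0)^2 + var_Z M alpha0 sigma2 eta) \<le> 1"
proof -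
  define a L S c where "a = real alpha0" and "L = ln (1/eps)"
    and "S = (2::real)^(M+1) - 2" and "c = (1 - 2*eta)^2"
  define P Q where "P = eta * (1 - eta) / c * S" and "Q = sigma2 * (1 + eta^2 / c) * S"
  have "2 \<le> (2::real) ^ (M + 1)"
    by simp
  then have "0 \<le> L" "0 \<le> S" "0 < c" "0 \<le> a"
    using assms(3-5) by (simp_all add: L_def S_def c_def a_def)
  then have "0 \<le> Q"
    using assms(1) by (simp add: Q_def)
  have split: "S * sigma2 / a^2 + var_Z M alpha0 sigma2 eta = P / a + Q / a^2"
    by (simp add: var_Z_def P_def Q_def a_def S_def c_def divide_inverse algebra_simps)
  have read: "8 * L * (P / a) \<le> 1/2"
  proof (cases "a = 0")
    case False
    have "16 * P * L \<le> a"
      using alpha0_read by (simp add: P_def L_def S_def c_def a_def algebra_simps)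
    then show ?thesis
      using False \<open>0 \<le> a\<close> by (simp add: field_simps)
  qed simp
  have "sqrt (16 * Q * L) \<le> a"
    using alpha0_cov by (simp add: Q_def L_def S_def c_def a_def mult.assoc)
  then have "(sqrt (16 * Q * L))\<^sup>2 \<le> a\<^sup>2"
    using \<open>0 \<le> Q\<close> \<open>0 \<le> L\<close> by (intro power_mono) simp_all
  then have cov: "8 * L * (Q / a^2) \<le> 1/2"
    using \<open>0 \<le> Q\<close> \<open>0 \<le> L\<close> by (cases "a = 0") (simp_all add: field_simps)
  show ?thesis
    using split read cov by (simp add: a_def L_def S_def distrib_left)
qed

theorem theorem3:
  fixes M alpha0 :: nat and sigma2 eta eps :: real
  assumes "sigma2 \<ge> 0" and "0 < eta" and "eta < 1/2"
    and "0 < eps" and "eps < 1"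
    and "real alpha0 \<ge> 16 * eta * (1 - eta) / (1 - 2*eta)^2 * ((2::real)^(M+1) - 2) * ln (1/eps)"
    and "real alpha0 \<ge> sqrt (16 * sigma2 * (1 + eta^2 / (1 - 2*eta)^2) * ((2::real)^(M+1) - 2) * ln (1/eps))"
  shows "\<exists>psi :: (nat \<Rightarrow> bool) \<Rightarrow> real \<Rightarrow> (nat \<Rightarrow> bool).
           (\<forall>y m. (\<lambda>g. psi y g m) \<in> measurable borel (count_space UNIV)) \<and>
           (\<forall>x y. measure (noise_space M alpha0 sigma2 eta)
                    {w \<in> space (noise_space M alpha0 sigma2 eta).
                       \<exists>m<M. psi y (obs M x y w) m \<noteq> x m} \<le> eps)"
proof (intro exI[of _ "decode M"] conjI allI)
  fix y m
  show "(\<lambda>g. decode M y g m) \<in> measurable borel (count_space UNIV)"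
    by (rule measurable_decode)
next
  fix x y
  let ?V = "noise_var M alpha0 sigma2 eta x y" and ?L = "ln (1 / eps)"
  have var_Z: "0 \<le> var_Z M alpha0 sigma2 eta"
    using assms by (intro var_Z_nonneg) auto
  define B where "B = ((2::real)^(M+1) - 2) * sigma2 / (real alpha0)^2 + var_Z M alpha0 sigma2 eta"
  have "?V * ?L \<le> B * ?L"
    unfolding B_def using assms by (intro mult_right_mono noise_var_le) auto
  moreover have "8 * ?L * B \<le> 1"
    unfolding B_def by (rule variance_budget[OF assms])
  ultimately have "2 * ?V * ?L \<le> (1 / 2)\<^sup>2"
    by (simp add: power2_eq_square mult.commute mult.left_commute)
  then have "measure (gauss 0 ?V) {u. 1 / 2 \<le> \<bar>u\<bar>} \<le> eps"
    using assms(4) by (intro measure_gauss_tail_le noise_var_nonneg assms(1) var_Z) auto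
  then show "measure (noise_space M alpha0 sigma2 eta)
      {w \<in> space (noise_space M alpha0 sigma2 eta). \<exists>m<M. decode M y (obs M x y w) m \<noteq> x m} \<le> eps"
    using measure_decode_error_le[OF assms(1) var_Z] by (rule order_trans[rotated])
qed

end
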